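(* Let $d \ge 1$, $p \in [0,1/2)$, $\mathbf{x} \in \mathbb{R}^d$, $G > 0$, $\lambda > 0$. Let measurements $y_k = \langle \mathbf{x}, \mathbf{a}_k\rangle + \epsilon_k$ ($k = 0,1,\dots$) be given, where $\epsilon_k = \xi_k\nu_k$ with $\xi_k$ an indicator equal to $1$ with probability $p$, independent of all other variables, and $\nu_k$ arbitrary (possibly dependent on $\mathbf{x}$ and the measurement vectors). Let $\mathcal{F}_k$ be the $\sigma$-algebra generated by $\{\mathbf{a}_0,\epsilon_0\},\dots,\{\mathbf{a}_{k-1},\epsilon_{k-1}\}$, and assume each $\mathbf{a}_k \in \mathbb{R}^d$ has unit norm and is independent of $\mathcal{F}_k$, the vectors $\sqrt d\,\mathbf{a}_k$ are i.i.d. mean-zero isotropic, and for every $\mathcal{F}_k$-measurable $\mathbf{u}$, $\mathbb{E}_{\mathbf{a}_k}[|\langle \mathbf{u},\mathbf{a}_k\rangle| \mid \mathbf{u}] \ge \widetilde{C}\|\mathbf{u}\|_2/\sqrt d$ for a constant $\widetilde C > 0$. Let $\mathbf{x}_0 = 0$, $\mathbf{x}_{k+1} = \mathbf{x}_k + G\lambda^{-k}\mathrm{sign}(y_k - \langle \mathbf{x}_k,\mathbf{a}_k\rangle)\mathbf{a}_k$, $\mathbf{u}_k := \lambda^k(\mathbf{x} - \mathbf{x}_k)/G$ and $Y_k := \|\mathbf{u}_k\|_2^2$, so that $$Y_{k+1} = \lambda^2\Big\{\|\mathbf{u}_k\|^2 - 2\langle \mathbf{u}_k,\mathbf{a}_k\rangle\,\mathrm{sign}\big(\langle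 \mathbf{u}_k,\mathbf{a}_k\rangle + \lambda^k\epsilon_k/G\big) + 1\Big\}.$$ Suppose $$1 < \lambda^2 \le 1 + \widetilde{C}^2\frac{(1-2p)^2}{49d} < \frac{50}{49},$$ and set $a = \frac{1}{2(\lambda^2-1)}$, $\eta = c^*\sqrt{\lambda^2-1}$ with $$c^* = \frac{1}{8\lambda^2}\Big[\frac{\lambda^2(1-2p)\widetilde C}{\sqrt2\sqrt d} - \sqrt{\lambda^2-1}\Big(\frac32 + \frac{\lambda^2}{2}\Big)\Big].$$ Then $$\mathbb{E}\big[e^{\eta(Y_{k+1} - a)}\mathbb{1}_{\{Y_k < a\}} \mid \mathcal{F}_k\big] \le \exp\Big\{\frac{\widetilde C(1-2p)}{6\sqrt d}\Big\}.$$
   Context: $\mathrm{sign}$ is the sign function. *)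

theory Defs
  imports "HOL-Analysis.Analysis" "HOL-Probability.Probability"
begin

text \<open>Sign function with the convention sign 0 = 1, so that sign t squared is 1 for all t
  (needed for the displayed recursion of Y (k+1) in the paper).\<close>
definition sign :: "real \<Rightarrow> real" where
  "sign t = (if t < 0 then -1 else 1)"

definition gen_events :: "'a measure \<Rightarrow> ('a \<Rightarrow> 'b::topological_space) \<Rightarrow> 'a set set" where
  "gen_events M X = {X -` B \<inter> space M | B. B \<in> sets borel}"

fun iterate :: "real \<Rightarrow> real \<Rightarrow> (nat \<Rightarrow> 'a \<Rightarrow> real ^ 'd) \<Rightarrow> (nat \<Rightarrow> 'a \<Rightarrow> real)
    \<Rightarrow> nat \<Rightarrow> 'a \<Rightarrow> real ^ 'd" where
  "iterate G lam a y 0 \<omega> = 0"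
| "iterate G lam a y (Suc k) \<omega> = iterate G lam a y k \<omega> +
     (G * inverse lam ^ k * sign (y k \<omega> - iterate G lam a y k \<omega> \<bullet> a k \<omega>)) *\<^sub>R a k \<omega>"

end

theory Submission
  imports Defs
begin

text \<open>Write \<open>s = \<surd>(\<lambda>\<^sup>2 - 1)\<close>, so that \<open>\<lambda>\<^sup>2 = 1 + s\<^sup>2\<close> and \<open>a = 1/(2s\<^sup>2)\<close>. One step maps \<open>u\<^sub>k\<close> to
  \<open>\<lambda>(u\<^sub>k - \<sigma> a\<^sub>k)\<close> with \<open>|\<sigma>| = 1\<close> and \<open>\<parallel>a\<^sub>k\<parallel> = 1\<close>, hence \<open>\<parallel>u\<^sub>k\<^sub>+\<^sub>1\<parallel> \<le> \<lambda>(\<parallel>u\<^sub>k\<parallel> + 1)\<close>. On the event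
  \<open>Y\<^sub>k < a\<close> this gives the deterministic bound \<open>Y\<^sub>k\<^sub>+\<^sub>1 - a \<le> 1/2 + \<surd>2 \<lambda>\<^sup>2/s + \<lambda>\<^sup>2\<close>, and the choice
  of \<open>\<eta>\<close> together with \<open>s \<le> C(1 - 2p)/(7\<surd>d) < 1/7\<close> makes \<open>\<eta>\<close> times this excess at most
  \<open>C(1 - 2p)/(6\<surd>d)\<close>. The integrand is thus bounded pointwise, and so is its conditional
  expectation.\<close>

text \<open>No measurability of \<open>f\<close> is needed: otherwise \<^const>\<open>nn_cond_exp\<close> is \<open>0\<close> by definition.\<close>

lemma (in finite_measure) nn_cond_exp_le_const:
  assumes "AE x in M. f x \<le> c"
  shows "AE x in M. nn_cond_exp M F f x \<le> c"
proof (cases "f \<in> borel_measurable M \<and> subalgebra M F")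
  case True
  interpret finite_measure_subalgebra M F
    using True by unfold_locales auto
  have "AE x in M. nn_cond_exp M F f x \<le> nn_cond_exp M F (\<lambda>_. c) x"
    using True assms by (intro nn_cond_exp_mono) auto
  moreover have "AE x in M. c = nn_cond_exp M F (\<lambda>_. c) x"
    by (rule nn_cond_exp_F_meas) simp
  ultimately show ?thesis by eventually_elim simp
next
  case False
  then have "nn_cond_exp M F f = (\<lambda>_. 0)" unfolding nn_cond_exp_def by (rule if_not_P)
  then show ?thesis by simp
qed

lemma sqrt_diff_one_bounds:
  fixes t L :: real
  assumes "t > 0" "1 < L" "L \<le> 1 + t\<^sup>2 / 49" "1 + t\<^sup>2 / 49 < 50 / 49"
  shows "0 < sqrt (L - 1)" "sqrt (L - 1) \<le> t / 7" "t < 1"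
proof -
  show "0 < sqrt (L - 1)" using assms(2) by simp
  have "sqrt (L - 1) \<le> sqrt ((t / 7)\<^sup>2)"
    using assms(3) by (simp add: power_divide)
  then show "sqrt (L - 1) \<le> t / 7" using assms(1) by simp
  have "t\<^sup>2 < 1\<^sup>2" using assms(4) by simp
  then show "t < 1" using assms(1) by (simp add: power_less_imp_less_base)
qed

lemma step_rate_pos_and_excess_le:
  fixes s t :: real
  assumes s: "0 < s" "s \<le> t / 7" and t: "t < 1"
  defines "L \<equiv> 1 + s\<^sup>2"
  defines "c \<equiv> L * t / sqrt 2 - s * (3 + L) / 2"
  shows "0 < s / (8 * L) * c" and "s / (8 * L) * c * (1/2 + sqrt 2 * L / s + L) \<le> t / 6"
proof -
  have t0: "0 < t" using s by linarith
  have "s\<^sup>2 \<le> (t / 7)\<^sup>2" using s by (intro power_mono) simp_all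
  moreover have "t\<^sup>2 \<le> 1" using t0 t by (simp add: power_le_one)
  ultimately have L: "1 \<le> L" "L \<le> 50 / 49" unfolding L_def by (simp_all add: power_divide)
  have "t / 2 < L * t / sqrt 2"
  proof -
    have "t / 2 < t / sqrt 2"
      using t0 by (intro divide_strict_left_mono) (simp_all add: sqrt2_less_2)
    also have "\<dots> \<le> L * t / sqrt 2" using L t0 by (simp add: divide_right_mono)
    finally show ?thesis .
  qed
  moreover have "s * (3 + L) \<le> t / 7 * (3 + 50 / 49)"
    using s L by (intro mult_mono) simp_all
  ultimately have "0 < c" unfolding c_def using t0 by simp
  then show "0 < s / (8 * L) * c" using s L by simp
  have rr: "sqrt 2 * (sqrt 2 * z) = 2 * z" for z :: real by (simp add: mult.assoc[symmetric])
  have "s / (8 * L) * c * (1/2 + sqrt 2 * L / s + L)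
      = c * sqrt 2 / 8 + s * c * (1/2 + L) / (8 * L)"
    using s L by (simp add: field_simps)
  also have "c * sqrt 2 / 8 = L * t / 8 - sqrt 2 * s * (3 + L) / 16"
    unfolding c_def by (simp add: field_simps rr)
  also have "s * c * (1/2 + L) / (8 * L) \<le> s * (L * t / sqrt 2) * (1/2 + L) / (8 * L)"
    using s L unfolding c_def by (intro divide_right_mono mult_right_mono mult_left_mono) simp_all
  also have "\<dots> = sqrt 2 * s * t * (1/2 + L) / 16"
    using L by (simp add: field_simps rr)
  also have "\<dots> \<le> sqrt 2 * s * (1/2 + L) / 16"
    using s t L by (intro divide_right_mono mult_right_mono) simp_all
  finally have "s / (8 * L) * c * (1/2 + sqrt 2 * L / s + L)
      \<le> L * t / 8 - sqrt 2 * s * (3 + L) / 16 + sqrt 2 * s * (1/2 + L) / 16"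
    by simp
  also have "\<dots> \<le> L * t / 8" using s by (simp add: field_simps)
  also have "\<dots> \<le> t / 6" using L t0 by simp
  finally show "s / (8 * L) * c * (1/2 + sqrt 2 * L / s + L) \<le> t / 6" .
qed

lemma sq_step_excess_le:
  fixes s n :: real
  assumes s: "s > 0" and n: "0 \<le> n" "n\<^sup>2 < 1 / (2 * s\<^sup>2)"
  shows "(1 + s\<^sup>2) * (n + 1)\<^sup>2 - 1 / (2 * s\<^sup>2) \<le> 1/2 + sqrt 2 * (1 + s\<^sup>2) / s + (1 + s\<^sup>2)"
proof -
  let ?b = "1 / (sqrt 2 * s)"
  have "n\<^sup>2 < ?b\<^sup>2" using n s by (simp add: power_divide power_mult_distrib)
  then have "n < ?b" by (rule power2_less_imp_less) (use s in simp)
  then have "(n + 1)\<^sup>2 \<le> (?b + 1)\<^sup>2" using n by (intro power_mono) simp_all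
  then have "(1 + s\<^sup>2) * (n + 1)\<^sup>2 \<le> (1 + s\<^sup>2) * (?b + 1)\<^sup>2"
    by (rule mult_left_mono) simp_all
  also have "\<dots> = (1 + s\<^sup>2) / (2 * s\<^sup>2) + sqrt 2 * (1 + s\<^sup>2) / s + (1 + s\<^sup>2)"
  proof -
    have "2 / (sqrt 2 * s) = sqrt 2 / s"
      by (metis divide_divide_eq_left real_div_sqrt zero_le_numeral)
    then have "(?b + 1)\<^sup>2 = 1 / (2 * s\<^sup>2) + sqrt 2 / s + 1"
      by (simp add: power2_sum power_divide power_mult_distrib)
    then show ?thesis by (simp add: algebra_simps add_divide_distrib)
  qed
  also have "(1 + s\<^sup>2) / (2 * s\<^sup>2) = 1 / (2 * s\<^sup>2) + 1/2" using s by (simp add: field_simps)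
  finally show ?thesis by simp
qed

lemma iterate_scaled_residual_Suc:
  assumes "G \<noteq> 0" "lam \<noteq> 0"
  shows "(lam ^ Suc k / G) *\<^sub>R (x - iterate G lam a y (Suc k) \<omega>)
       = lam *\<^sub>R ((lam ^ k / G) *\<^sub>R (x - iterate G lam a y k \<omega>)
                 - sign (y k \<omega> - iterate G lam a y k \<omega> \<bullet> a k \<omega>) *\<^sub>R a k \<omega>)"
proof -
  define \<sigma> where "\<sigma> = sign (y k \<omega> - iterate G lam a y k \<omega> \<bullet> a k \<omega>)"
  have "lam ^ Suc k / G * (G * inverse lam ^ k * \<sigma>) = lam * \<sigma>"
    using assms by (simp add: field_simps power_inverse)
  then show ?thesis
    unfolding \<sigma>_def[symmetric] iterate.simps scaleR_diff_right scaleR_add_right scaleR_scaleR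
    by (simp add: algebra_simps)
qed

lemma norm_diff_sign_scaleR_unit_le:
  fixes u v :: "'a::real_normed_vector"
  assumes "norm v = 1"
  shows "norm (u - sign t *\<^sub>R v) \<le> norm u + 1"
proof -
  have "norm (sign t *\<^sub>R v) = 1" using assms by (simp add: sign_def)
  then show ?thesis using norm_triangle_ineq4[of u "sign t *\<^sub>R v"] by linarith
qed

lemma norm_iterate_scaled_residual_Suc_le:
  assumes "G \<noteq> 0" "lam > 0" "norm (a k \<omega>) = 1"
  shows "norm ((lam ^ Suc k / G) *\<^sub>R (x - iterate G lam a y (Suc k) \<omega>))
       \<le> lam * (norm ((lam ^ k / G) *\<^sub>R (x - iterate G lam a y k \<omega>)) + 1)"
proof -
  let ?u = "(lam ^ k / G) *\<^sub>R (x - iterate G lam a y k \<omega>)"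
  have "norm (?u - sign (y k \<omega> - iterate G lam a y k \<omega> \<bullet> a k \<omega>) *\<^sub>R a k \<omega>) \<le> norm ?u + 1"
    by (rule norm_diff_sign_scaleR_unit_le[OF assms(3)])
  then have "lam * norm (?u - sign (y k \<omega> - iterate G lam a y k \<omega> \<bullet> a k \<omega>) *\<^sub>R a k \<omega>)
      \<le> lam * (norm ?u + 1)"
    using assms(2) by (simp add: mult_left_mono)
  then show ?thesis
    unfolding iterate_scaled_residual_Suc[OF assms(1) less_imp_neq[OF assms(2), symmetric]]
      norm_scaleR[of lam] abs_of_pos[OF assms(2)] .
qed

lemma sq_norm_scaled_residual_Suc_excess_le:
  assumes "G \<noteq> 0" "lam > 0" "norm (a k \<omega>) = 1" "s > 0" "lam\<^sup>2 = 1 + s\<^sup>2"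
    and small: "(norm ((lam ^ k / G) *\<^sub>R (x - iterate G lam a y k \<omega>)))\<^sup>2 < 1 / (2 * s\<^sup>2)"
  shows "(norm ((lam ^ Suc k / G) *\<^sub>R (x - iterate G lam a y (Suc k) \<omega>)))\<^sup>2 - 1 / (2 * s\<^sup>2)
       \<le> 1/2 + sqrt 2 * lam\<^sup>2 / s + lam\<^sup>2"
proof -
  let ?n = "norm ((lam ^ k / G) *\<^sub>R (x - iterate G lam a y k \<omega>))"
  have "(norm ((lam ^ Suc k / G) *\<^sub>R (x - iterate G lam a y (Suc k) \<omega>)))\<^sup>2 \<le> (lam * (?n + 1))\<^sup>2"
    using norm_iterate_scaled_residual_Suc_le[where a = a and k = k, OF assms(1-3)]
    by (intro power_mono) simp_all
  also have "\<dots> = (1 + s\<^sup>2) * (?n + 1)\<^sup>2"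
    using assms(5) by (simp add: power_mult_distrib)
  finally show ?thesis
    using sq_step_excess_le[OF assms(4) norm_ge_zero small] assms(5) by simp
qed

theorem lemma5p3:
  fixes M :: "'w measure"
    and x :: "real ^ 'd"
    and a :: "nat \<Rightarrow> 'w \<Rightarrow> real ^ 'd"
    and \<xi> \<nu> \<epsilon> y :: "nat \<Rightarrow> 'w \<Rightarrow> real"
    and F :: "nat \<Rightarrow> 'w measure"
    and p G lam Ct :: real
    and k :: nat
  assumes prob: "prob_space M"
    and p: "0 \<le> p" "p < 1/2"
    and G: "G > 0"
    and lam: "lam > 0"
    and Ct: "Ct > 0"
    and meas_a: "\<And>j. a j \<in> borel_measurable M"
    and meas_\<xi>: "\<And>j. \<xi> j \<in> borel_measurable M"
    and meas_\<nu>: "\<And>j. \<nu> j \<in> borel_measurable M"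
    and \<xi>_01: "\<And>j \<omega>. \<omega> \<in> space M \<Longrightarrow> \<xi> j \<omega> \<in> {0, 1}"
    and \<xi>_prob: "\<And>j. measure M {\<omega> \<in> space M. \<xi> j \<omega> = 1} = p"
    and \<xi>_indep: "\<And>j. prob_space.indep_set M (gen_events M (\<xi> j))
        (sigma_sets (space M) (\<Union>i. gen_events M (a i) \<union> gen_events M (\<nu> i)
                                     \<union> (if i = j then {} else gen_events M (\<xi> i))))"
    and \<epsilon>_def: "\<And>j \<omega>. \<epsilon> j \<omega> = \<xi> j \<omega> * \<nu> j \<omega>"
    and y_def: "\<And>j \<omega>. y j \<omega> = x \<bullet> a j \<omega> + \<epsilon> j \<omega>"
    and F_def: "\<And>j. F j = sigma (space M) (\<Union>i<j. gen_events M (a i) \<union> gen_events M (\<epsilon> i))"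
    and a_unit: "\<And>j \<omega>. \<omega> \<in> space M \<Longrightarrow> norm (a j \<omega>) = 1"
    and a_indep_F: "\<And>j. prob_space.indep_set M (gen_events M (a j)) (sets (F j))"
    and a_indep: "prob_space.indep_vars M (\<lambda>_. borel) (\<lambda>j \<omega>. sqrt (CARD('d)) *\<^sub>R a j \<omega>) UNIV"
    and a_ident: "\<And>j. distr M borel (\<lambda>\<omega>. sqrt (CARD('d)) *\<^sub>R a j \<omega>)
                       = distr M borel (\<lambda>\<omega>. sqrt (CARD('d)) *\<^sub>R a 0 \<omega>)"
    and a_mean0: "\<And>j i. prob_space.expectation M (\<lambda>\<omega>. sqrt (CARD('d)) * a j \<omega> $ i) = 0"
    and a_iso: "\<And>j i i'. prob_space.expectation M
                   (\<lambda>\<omega>. (sqrt (CARD('d)) * a j \<omega> $ i) * (sqrt (CARD('d)) * a j \<omega> $ i'))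
                 = (if i = i' then 1 else 0)"
    and small_ball: "\<And>j v. prob_space.expectation M (\<lambda>\<omega>. \<bar>v \<bullet> a j \<omega>\<bar>)
                              \<ge> Ct * norm v / sqrt (CARD('d))"
    and lam_bounds: "1 < lam\<^sup>2"
      "lam\<^sup>2 \<le> 1 + Ct\<^sup>2 * (1 - 2 * p)\<^sup>2 / (49 * CARD('d))"
      "1 + Ct\<^sup>2 * (1 - 2 * p)\<^sup>2 / (49 * CARD('d)) < 50 / 49"
  defines "Y \<equiv> \<lambda>j \<omega>. (norm ((lam ^ j / G) *\<^sub>R (x - iterate G lam a y j \<omega>)))\<^sup>2"
    and "thr \<equiv> 1 / (2 * (lam\<^sup>2 - 1))"
    and "\<eta> \<equiv> (1 / (8 * lam\<^sup>2) * (lam\<^sup>2 * (1 - 2 * p) * Ct / (sqrt 2 * sqrt (CARD('d)))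
                    - sqrt (lam\<^sup>2 - 1) * (3 / 2 + lam\<^sup>2 / 2))) * sqrt (lam\<^sup>2 - 1)"
  shows "AE \<omega> in M. nn_cond_exp M (F k)
            (\<lambda>\<omega>. ennreal (exp (\<eta> * (Y (Suc k) \<omega> - thr)) * indicator {\<omega>. Y k \<omega> < thr} \<omega>)) \<omega>
          \<le> ennreal (exp (Ct * (1 - 2 * p) / (6 * sqrt (CARD('d)))))"
proof -
  interpret prob_space M by (rule prob)
  define t where "t = Ct * (1 - 2 * p) / sqrt (CARD('d))"
  define s where "s = sqrt (lam\<^sup>2 - 1)"
  have t0: "t > 0" using Ct p unfolding t_def by simp
  have "t\<^sup>2 / 49 = Ct\<^sup>2 * (1 - 2 * p)\<^sup>2 / (49 * CARD('d))"
    unfolding t_def by (simp add: power_divide power_mult_distrib)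
  then have s: "0 < s" "s \<le> t / 7" "t < 1"
    using sqrt_diff_one_bounds[OF t0 lam_bounds(1)] lam_bounds(2,3) unfolding s_def by simp_all
  have lam2: "lam\<^sup>2 = 1 + s\<^sup>2" using lam_bounds(1) unfolding s_def by simp
  have thr: "thr = 1 / (2 * s\<^sup>2)" unfolding thr_def lam2 by simp
  have "\<eta> = s / (8 * lam\<^sup>2) * (lam\<^sup>2 * t / sqrt 2 - s * (3 + lam\<^sup>2) / 2)"
    unfolding \<eta>_def s_def[symmetric] t_def by (simp add: field_simps)
  then have \<eta>: "0 < \<eta>" "\<eta> * (1/2 + sqrt 2 * lam\<^sup>2 / s + lam\<^sup>2) \<le> t / 6"
    using step_rate_pos_and_excess_le[OF s] s(1) unfolding lam2 by simp_all
  have "exp (\<eta> * (Y (Suc k) \<omega> - thr)) * indicator {\<omega>. Y k \<omega> < thr} \<omega> \<le> exp (t / 6)"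
    if "\<omega> \<in> space M" for \<omega>
  proof (cases "Y k \<omega> < thr")
    case True
    then have "Y (Suc k) \<omega> - thr \<le> 1/2 + sqrt 2 * lam\<^sup>2 / s + lam\<^sup>2"
      unfolding Y_def thr using G lam a_unit[OF that] s(1) lam2
      by (intro sq_norm_scaled_residual_Suc_excess_le) simp_all
    then have "\<eta> * (Y (Suc k) \<omega> - thr) \<le> t / 6"
      using \<eta> by (meson mult_left_mono less_imp_le order_trans)
    then show ?thesis using True by simp
  qed simp
  then have "AE \<omega> in M. nn_cond_exp M (F k)
      (\<lambda>\<omega>. ennreal (exp (\<eta> * (Y (Suc k) \<omega> - thr)) * indicator {\<omega>. Y k \<omega> < thr} \<omega>)) \<omega>
      \<le> ennreal (exp (t / 6))"
    by (intro nn_cond_exp_le_const AE_I2 ennreal_leI)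
  moreover have "t / 6 = Ct * (1 - 2 * p) / (6 * sqrt (CARD('d)))" unfolding t_def by simp
  ultimately show ?thesis by simp
qed

end
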